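(* Let $T\ge 1$ be an integer and for integers $l\ge1$, $0\le n\le l-1$ with $l-n\le T$ put $P^l_D(n)=\frac{\prod_{i=0}^{l-n-1}(1-\frac{i}{T})}{T^{n}}$. If $l \le \lfloor T-\sqrt{T}\rfloor +1$, $n\ge 0$ and $n+1 \le l-2$, then $P^{l-1}_D(n+1) \le P^l_D(n)$. *)

theory Defs
  imports Complex_Main
begin

definition PD :: "nat \<Rightarrow> nat \<Rightarrow> nat \<Rightarrow> real" where
  "PD T l n = (\<Prod>i\<in>{0..<l-n}. (1 - real i / real T)) / real T ^ n"

end

theory Submission
  imports Defs
begin

text \<open>Passing from \<open>PD T l n\<close> to \<open>PD T (l - 1) (n + 1)\<close> drops the last two factors
  \<open>(1 - j/T)(1 - (j+1)/T)\<close>, \<open>j = l - n - 2\<close>, and divides by one more \<open>T\<close>.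
  The step is therefore monotone exactly when \<open>(T - j)(T - j - 1) \<ge> T\<close>, and the bound
  \<open>l \<le> \<lfloor>T - \<surd>T\<rfloor> + 1\<close> gives \<open>T - j - 1 \<ge> \<surd>T\<close>, hence
  \<open>(T - j)(T - j - 1) \<ge> (\<surd>T + 1)\<surd>T \<ge> T\<close>.\<close>

lemma PD_nonneg:
  assumes "l - n \<le> Suc T"
  shows "0 \<le> PD T l n"
  unfolding PD_def
proof (intro divide_nonneg_nonneg prod_nonneg)
  fix i assume "i \<in> {0..<l - n}"
  with assms have "real i \<le> real T" by simp
  then show "0 \<le> 1 - real i / real T"
    by (cases "T = 0") (simp_all add: field_simps)
qed simp

lemma PD_eq_PD_pred_Suc_mult:
  assumes "n + 2 \<le> l" and "T > 0"
  shows "PD T l n = PD T (l - 1) (n + 1)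
           * (real T * (1 - real (l - n - 2) / real T) * (1 - real (l - n - 1) / real T))"
proof -
  define j where "j = l - n - 2"
  have "l - n = Suc (Suc j)" "l - 1 - (n + 1) = j" "l - n - 1 = Suc j"
    using assms(1) unfolding j_def by auto
  then show ?thesis
    using assms(2) unfolding PD_def j_def[symmetric]
    by (simp add: prod.atLeast0_lessThan_Suc field_simps)
qed

lemma le_mult_diff_diff_one:
  fixes T x :: real
  assumes "0 \<le> T" and "x + 1 + sqrt T \<le> T"
  shows "T \<le> (T - x) * (T - x - 1)"
proof -
  have "T \<le> (sqrt T + 1) * sqrt T"
    using assms(1) by (simp add: algebra_simps)
  also have "\<dots> \<le> (T - x) * (T - x - 1)"
    using assms(2) real_sqrt_ge_zero[OF assms(1)] by (intro mult_mono) linarith+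
  finally show ?thesis .
qed

lemma one_le_two_factor_ratio:
  fixes T j :: nat
  assumes "T > 0" and "real j + 1 + sqrt (real T) \<le> real T"
  shows "1 \<le> real T * (1 - real j / real T) * (1 - real (Suc j) / real T)"
proof -
  have "real T * (1 - real j / real T) * (1 - real (Suc j) / real T)
          = (real T - real j) * (real T - real j - 1) / real T"
    using assms(1) by (simp add: field_simps)
  moreover have "real T \<le> (real T - real j) * (real T - real j - 1)"
    using assms(2) by (intro le_mult_diff_diff_one) auto
  ultimately show ?thesis
    using assms(1) by simp
qed

theorem mainTheorem3:
  fixes T l n :: nat
  assumes "T \<ge> 1"
    and "l \<ge> 1"
    and "int l \<le> \<lfloor>real T - sqrt (real T)\<rfloor> + 1"
    and "n + 1 \<le> l - 2"
  shows "PD T (l - 1) (n + 1) \<le> PD T l n"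
proof -
  have "real l \<le> real T - sqrt (real T) + 1"
    using assms(3) by linarith
  then have bound: "real (l - n - 2) + 1 + sqrt (real T) \<le> real T"
    using assms(4) by linarith
  have "l - n - 1 = Suc (l - n - 2)"
    using assms(4) by simp
  then have factor: "1 \<le> real T * (1 - real (l - n - 2) / real T) * (1 - real (l - n - 1) / real T)"
    using one_le_two_factor_ratio[OF _ bound] assms(1) by simp
  have "l - 1 - (n + 1) = l - n - 2"
    by simp
  then have "l - 1 - (n + 1) \<le> Suc T"
    using bound real_sqrt_ge_zero[of "real T"] by linarith
  then have nonneg: "0 \<le> PD T (l - 1) (n + 1)"
    by (rule PD_nonneg)
  have "PD T (l - 1) (n + 1) * 1
      \<le> PD T (l - 1) (n + 1)
          * (real T * (1 - real (l - n - 2) / real T) * (1 - real (l - n - 1) / real T))"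
    using factor nonneg by (rule mult_left_mono)
  also have "\<dots> = PD T l n"
    using PD_eq_PD_pred_Suc_mult[of n l T] assms(1,4) by simp
  finally show ?thesis
    by simp
qed

end
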